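(* Let $\{c_n\}_{n\ge1}$ be a real sequence with $\sum_{n=1}^\infty |c_n|<+\infty$, such that $\sum_{n=N}^{\infty}(c_n)^2>0$ and $\sum_{n=N}^\infty c_n\neq 0$ for every $N\ge1$. Let $f(x):=\sum_{n=1}^\infty c_n\varphi^{(n)}(x)$ and $f_N(x):=\sum_{n=1}^{N-1}c_n\varphi^{(n)}(x)$ for $x\in[0,1]$. If for every $K>0$ $$\sum_{N=1}^\infty\exp\left\{-K\cdot\frac{\left(\sum_{n=N}^\infty c_n\right)^2}{\sum_{n=N}^\infty (c_n)^2}\right\}<+\infty,$$ then $$\lim_{N\to\infty}\frac{f(x)-f_N(x)}{\frac12\sum_{n=N}^\infty c_n}=1\quad\text{for Lebesgue-a.e. } x\in[0,1].$$
   Context: The tent map on $[0,1]$ is $\varphi(x)=2x$ for $x\in[0,1/2]$ and $\varphi(x)=2(1-x)$ for $x\in[1/2,1]$; it is extended to $\mathbb{R}$ by $\varphi(x):=\varphi(x-[x])$, and $\varphi^{(n)}$ denotes the $n$-fold iterate of $\varphi$, so that $\varphi^{(n)}(x)=\varphi(2^{n-1}x)$. *)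

theory Defs
  imports "HOL-Analysis.Analysis"
begin

definition tent :: "real \<Rightarrow> real" where
  "tent x = (let y = x - of_int \<lfloor>x\<rfloor> in if y \<le> 1/2 then 2 * y else 2 * (1 - y))"

definition tent_iter :: "nat \<Rightarrow> real \<Rightarrow> real" where
  "tent_iter n = tent ^^ n"

end

theory Submission
  imports Defs "HOL-Probability.Hoeffding"
begin

(* Write phi_n for tent_iter n and S_N for the tail sum of c from N on. Then
   f - f_N = (1/2) S_N + D_N with D_N = sum_{n>=N} c_n (phi_n - 1/2), so the claim is D_N / S_N -> 0 a.e.
   The phi_n are not independent, but they satisfy Hoeffding's bound anyway: y and 1 - y have the same
   image under the tent map, so a factor exp (a (y - 1/2)) can be symmetrised into cosh, which is at most
   exp (a^2/8) on [0,1], and the tent map does not increase integrals over [0,1]. By induction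
   E exp (sum_j d_j (phi_j - 1/2)) <= exp (sum_j d_j^2 / 8), whence the Chernoff bound
   P (|D_N| >= e |S_N|) <= 2 exp (- 2 e^2 S_N^2 / sum_{n>=N} c_n^2). The hypothesis makes these
   probabilities summable in N for every e > 0, and Borel-Cantelli concludes. *)

lemma cosh_le_exp_square_half: "cosh (x::real) \<le> exp (x\<^sup>2 / 2)"
proof -
  define p :: real where "p = 1/2"
  define h where "h = 2 * \<bar>x\<bar>"
  have hoeffding: "-h * p + ln (1 + p * (exp h - 1)) \<le> h\<^sup>2 / 8"
    by (rule Hoeffdings_lemma_aux) (auto simp: p_def h_def)
  have "cosh x = cosh \<bar>x\<bar>"
    by (simp add: abs_real_def)
  also have "\<dots> = exp (-h * p) * (1 + p * (exp h - 1))"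
    by (simp add: p_def h_def cosh_def exp_minus field_simps flip: exp_add)
  also have "\<dots> = exp (-h * p + ln (1 + p * (exp h - 1)))"
  proof -
    have "1 + p * (exp h - 1) > 0"
      by (simp add: p_def h_def add_pos_nonneg)
    then show ?thesis
      by (simp add: exp_add exp_diff exp_minus field_simps)
  qed
  also have "\<dots> \<le> exp (x\<^sup>2 / 2)"
    using hoeffding by (simp add: h_def power_mult_distrib)
  finally show ?thesis .
qed

lemma tent_nonneg: "0 \<le> tent x"
  and tent_le_one: "tent x \<le> 1"
proof -
  have "0 \<le> x - of_int \<lfloor>x\<rfloor>" "x - of_int \<lfloor>x\<rfloor> < 1"
    by linarith+
  then show "0 \<le> tent x" "tent x \<le> 1"
    unfolding tent_def Let_def by auto
qed

lemma tent_lower_half: "0 \<le> y \<Longrightarrow> y \<le> 1/2 \<Longrightarrow> tent y = 2 * y"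
  using floor_eq_iff[of y 0] by (simp add: tent_def)

lemma tent_upper_half: "1/2 \<le> y \<Longrightarrow> y \<le> 1 \<Longrightarrow> tent y = 2 - 2 * y"
  using floor_eq_iff[of y 0] by (cases "y = 1") (simp_all add: tent_def)

lemma tent_one_minus: "0 \<le> y \<Longrightarrow> y \<le> 1 \<Longrightarrow> tent (1 - y) = tent y"
  by (cases "y \<le> 1/2") (simp_all add: tent_lower_half tent_upper_half)

lemma measurable_tent [measurable]: "tent \<in> borel_measurable borel"
  unfolding tent_def Let_def by measurable

lemma tent_iter_0 [simp]: "tent_iter 0 y = y"
  by (simp add: tent_iter_def)

lemma tent_iter_Suc: "tent_iter (Suc n) y = tent_iter n (tent y)"
  by (simp add: tent_iter_def funpow_Suc_right del: funpow.simps)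

lemma measurable_tent_iter [measurable]: "tent_iter n \<in> borel_measurable borel"
  unfolding tent_iter_def by (induction n) (simp_all add: measurable_comp)

lemma tent_iter_in_unit_interval: "0 < n \<Longrightarrow> tent_iter n y \<in> {0..1}"
  by (cases n) (simp_all add: tent_iter_def tent_nonneg tent_le_one)

(* In fact equality holds; the inequality spares us the overlap of the two halves at 1/2. *)
lemma nn_integral_comp_tent_le:
  assumes [measurable]: "h \<in> borel_measurable borel"
  shows "(\<integral>\<^sup>+y\<in>{0..1}. h (tent y) \<partial>lborel) \<le> (\<integral>\<^sup>+y\<in>{0..1}. h y \<partial>lborel)"
proof -
  let ?I = "\<integral>\<^sup>+y\<in>{0..1}. h y \<partial>lborel"
  have lower: "(\<integral>\<^sup>+y. h (2 * y) * indicator {0..1/2} y \<partial>lborel) = ennreal (1/2) * ?I"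
    using nn_integral_real_affine[of "\<lambda>y. h (2 * y) * indicator {0..1/2} y" "1/2" 0]
    by (simp add: indicator_def cong: if_cong)
  have upper: "(\<integral>\<^sup>+y. h (2 - 2 * y) * indicator {1/2..1} y \<partial>lborel) = ennreal (1/2) * ?I"
    using nn_integral_real_affine[of "\<lambda>y. h (2 - 2 * y) * indicator {1/2..1} y" "-1/2" 1]
    by (simp add: indicator_def conj_commute cong: if_cong)
  have "(\<integral>\<^sup>+y\<in>{0..1}. h (tent y) \<partial>lborel)
      \<le> (\<integral>\<^sup>+y. h (2 * y) * indicator {0..1/2} y + h (2 - 2 * y) * indicator {1/2..1} y \<partial>lborel)"
    by (intro nn_integral_mono) (auto simp: indicator_def tent_lower_half tent_upper_half)
  also have "\<dots> = ennreal (1/2) * ?I + ennreal (1/2) * ?I"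
    by (simp add: nn_integral_add lower upper)
  also have "\<dots> = (ennreal (1/2) + ennreal (1/2)) * ?I"
    by (simp only: distrib_right)
  also have "ennreal (1/2) + ennreal (1/2) = 1"
    by (subst ennreal_plus[symmetric]) auto
  finally show ?thesis
    by simp
qed

lemma nn_integral_exp_tilt_tent_le:
  fixes g :: "real \<Rightarrow> ennreal"
  assumes [measurable]: "g \<in> borel_measurable borel"
  shows "(\<integral>\<^sup>+y\<in>{0..1}. ennreal (exp (a * (y - 1/2))) * g (tent y) \<partial>lborel)
    \<le> ennreal (exp (a\<^sup>2 / 8)) * (\<integral>\<^sup>+y\<in>{0..1}. g (tent y) \<partial>lborel)"
proof -
  define I where "I b = (\<integral>\<^sup>+y\<in>{0..1}. ennreal (exp (b * (y - 1/2))) * g (tent y) \<partial>lborel)" for b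
  have "I a = (\<integral>\<^sup>+y. ennreal (exp (a * ((1 - y) - 1/2))) * g (tent (1 - y)) * indicator {0..1} (1 - y) \<partial>lborel)"
    using nn_integral_real_affine[of "\<lambda>y. ennreal (exp (a * (y - 1/2))) * g (tent y) * indicator {0..1} y" "-1" 1]
    by (simp add: I_def)
  also have "\<dots> = I (-a)"
    unfolding I_def by (intro nn_integral_cong) (simp add: tent_one_minus algebra_simps split: split_indicator)
  finally have reflect: "I a = I (-a)" .
  have pointwise: "exp (a * (y - 1/2)) + exp (- a * (y - 1/2)) \<le> 2 * exp (a\<^sup>2 / 8)"
    if "y \<in> {0..1}" for y
  proof -
    have "(y - 1/2)\<^sup>2 = 1/4 - y * (1 - y)"
      by (simp add: power2_eq_square algebra_simps)
    also have "\<dots> \<le> 1/4"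
      using that by simp
    finally have "(y - 1/2)\<^sup>2 \<le> 1/4" .
    then have "a\<^sup>2 * (y - 1/2)\<^sup>2 \<le> a\<^sup>2 * (1/4)"
      by (intro mult_left_mono) simp_all
    then have "exp ((a * (y - 1/2))\<^sup>2 / 2) \<le> exp (a\<^sup>2 / 8)"
      by (simp add: power_mult_distrib)
    then have "cosh (a * (y - 1/2)) \<le> exp (a\<^sup>2 / 8)"
      using cosh_le_exp_square_half[of "a * (y - 1/2)"] by linarith
    then show ?thesis
      by (simp add: cosh_def)
  qed
  have two: "ennreal (2 * exp (a\<^sup>2 / 8)) = 2 * ennreal (exp (a\<^sup>2 / 8))"
    by (simp add: ennreal_mult)
  have "2 * I a = I a + I (-a)"
    by (metis reflect mult_2)
  also have "\<dots> = (\<integral>\<^sup>+y\<in>{0..1}. ennreal (exp (a * (y - 1/2)) + exp (- a * (y - 1/2))) * g (tent y) \<partial>lborel)"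
    unfolding I_def by (subst nn_integral_add[symmetric]) (auto intro!: nn_integral_cong simp: distrib_right ennreal_plus)
  also have "\<dots> \<le> (\<integral>\<^sup>+y\<in>{0..1}. ennreal (2 * exp (a\<^sup>2 / 8)) * g (tent y) \<partial>lborel)"
  proof (intro nn_integral_mono)
    fix y :: real
    show "ennreal (exp (a * (y - 1/2)) + exp (- a * (y - 1/2))) * g (tent y) * indicator {0..1} y
      \<le> ennreal (2 * exp (a\<^sup>2 / 8)) * g (tent y) * indicator {0..1} y"
      using pointwise[of y] by (cases "y \<in> {0..1}") (simp_all del: ennreal_plus add: ennreal_leI mult_right_mono)
  qed
  also have "\<dots> = ennreal (2 * exp (a\<^sup>2 / 8)) * (\<integral>\<^sup>+y\<in>{0..1}. g (tent y) \<partial>lborel)"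
    unfolding mult.assoc by (rule nn_integral_cmult) simp
  also have "\<dots> = 2 * (ennreal (exp (a\<^sup>2 / 8)) * (\<integral>\<^sup>+y\<in>{0..1}. g (tent y) \<partial>lborel))"
    by (simp only: two mult.assoc)
  finally have "2 * I a \<le> 2 * (ennreal (exp (a\<^sup>2 / 8)) * (\<integral>\<^sup>+y\<in>{0..1}. g (tent y) \<partial>lborel))" .
  then show ?thesis
    by (simp add: I_def ennreal_mult_le_mult_iff)
qed

lemma nn_integral_exp_centered_tent_sum_le:
  "(\<integral>\<^sup>+y\<in>{0..1}. ennreal (exp (\<Sum>j<m. d j * (tent_iter j y - 1/2))) \<partial>lborel)
    \<le> ennreal (exp ((\<Sum>j<m. (d j)\<^sup>2) / 8))"
proof (induction m arbitrary: d)
  case 0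
  then show ?case
    by (simp add: emeasure_lborel_Icc_eq)
next
  case (Suc m)
  define g where "g z = ennreal (exp (\<Sum>j<m. d (Suc j) * (tent_iter j z - 1/2)))" for z
  have split: "(\<Sum>j<Suc m. d j * (tent_iter j y - 1/2)) = d 0 * (y - 1/2) + (\<Sum>j<m. d (Suc j) * (tent_iter j (tent y) - 1/2))" for y
    by (simp add: sum.lessThan_Suc_shift tent_iter_Suc del: sum.lessThan_Suc)
  have "(\<integral>\<^sup>+y\<in>{0..1}. ennreal (exp (\<Sum>j<Suc m. d j * (tent_iter j y - 1/2))) \<partial>lborel)
      = (\<integral>\<^sup>+y\<in>{0..1}. ennreal (exp (d 0 * (y - 1/2))) * g (tent y) \<partial>lborel)"
    unfolding split by (simp add: g_def exp_add ennreal_mult)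
  also have "\<dots> \<le> ennreal (exp ((d 0)\<^sup>2 / 8)) * (\<integral>\<^sup>+y\<in>{0..1}. g (tent y) \<partial>lborel)"
    by (rule nn_integral_exp_tilt_tent_le) (simp add: g_def)
  also have "\<dots> \<le> ennreal (exp ((d 0)\<^sup>2 / 8)) * (\<integral>\<^sup>+y\<in>{0..1}. g y \<partial>lborel)"
    by (intro mult_left_mono nn_integral_comp_tent_le) (simp_all add: g_def)
  also have "\<dots> \<le> ennreal (exp ((d 0)\<^sup>2 / 8)) * ennreal (exp ((\<Sum>j<m. (d (Suc j))\<^sup>2) / 8))"
    unfolding g_def by (intro mult_left_mono Suc.IH) simp
  also have "\<dots> = ennreal (exp ((\<Sum>j<Suc m. (d j)\<^sup>2) / 8))"
    by (simp add: sum.lessThan_Suc_shift add_divide_distrib exp_add ennreal_mult del: sum.lessThan_Suc)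
  finally show ?case .
qed

definition centered_tent_series :: "(nat \<Rightarrow> real) \<Rightarrow> real \<Rightarrow> real" where
  "centered_tent_series d y = (\<Sum>j. d j * (tent_iter j y - 1/2))"

lemma measurable_centered_tent_series [measurable]: "centered_tent_series d \<in> borel_measurable borel"
  unfolding centered_tent_series_def by measurable

lemma summable_centered_tent_terms:
  assumes "summable (\<lambda>j. \<bar>d j\<bar>)"
  shows "summable (\<lambda>j. d j * (tent_iter j y - 1/2))"
proof (rule summable_comparison_test'[OF assms, of 1])
  fix j :: nat
  assume "1 \<le> j"
  then have "\<bar>tent_iter j y - 1/2\<bar> \<le> 1"
    using tent_iter_in_unit_interval[of j y] by auto
  then show "norm (d j * (tent_iter j y - 1/2)) \<le> \<bar>d j\<bar>"
    by (simp add: abs_mult mult_left_le)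
qed

lemma summable_square_if_summable_abs:
  fixes d :: "nat \<Rightarrow> real"
  assumes "summable (\<lambda>j. \<bar>d j\<bar>)"
  shows "summable (\<lambda>j. (d j)\<^sup>2)"
proof -
  obtain j0 where small: "\<And>j. j0 \<le> j \<Longrightarrow> \<bar>d j\<bar> < 1"
    using LIMSEQ_D[OF summable_LIMSEQ_zero[OF assms], of 1] by auto
  show ?thesis
  proof (rule summable_comparison_test'[OF assms, of j0])
    fix j
    assume "j0 \<le> j"
    then have "\<bar>d j\<bar> * \<bar>d j\<bar> \<le> \<bar>d j\<bar>"
      using small[of j] by (intro mult_left_le) simp_all
    then show "norm ((d j)\<^sup>2) \<le> \<bar>d j\<bar>"
      by (simp add: power2_eq_square abs_mult)
  qed
qed

lemma centered_tent_series_scale: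
  assumes "summable (\<lambda>j. \<bar>d j\<bar>)"
  shows "centered_tent_series (\<lambda>j. s * d j) y = s * centered_tent_series d y"
  unfolding centered_tent_series_def
  using suminf_mult[OF summable_centered_tent_terms[OF assms], of s y] by (simp add: mult.assoc)

lemma nn_integral_exp_centered_tent_series_le:
  assumes sd: "summable (\<lambda>j. \<bar>d j\<bar>)"
  shows "(\<integral>\<^sup>+y\<in>{0..1}. ennreal (exp (centered_tent_series d y)) \<partial>lborel) \<le> ennreal (exp ((\<Sum>j. (d j)\<^sup>2) / 8))"
proof -
  define u where "u m y = ennreal (exp (\<Sum>j<m. d j * (tent_iter j y - 1/2))) * indicator {0..1} y" for m y
  have lim: "(\<lambda>m. u m y) \<longlonglongrightarrow> ennreal (exp (centered_tent_series d y)) * indicator {0..1} y" for y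
    unfolding u_def centered_tent_series_def
    by (intro tendsto_intros summable_LIMSEQ summable_centered_tent_terms[OF sd]) (simp add: indicator_def)
  have "(\<integral>\<^sup>+y\<in>{0..1}. ennreal (exp (centered_tent_series d y)) \<partial>lborel) = (\<integral>\<^sup>+y. liminf (\<lambda>m. u m y) \<partial>lborel)"
    by (intro nn_integral_cong) (simp add: lim_imp_Liminf[OF trivial_limit_sequentially lim])
  also have "\<dots> \<le> liminf (\<lambda>m. \<integral>\<^sup>+y. u m y \<partial>lborel)"
    by (rule nn_integral_liminf) (simp add: u_def)
  also have "\<dots> \<le> ennreal (exp ((\<Sum>j. (d j)\<^sup>2) / 8))"
  proof (intro Liminf_le always_eventually allI)
    fix m
    have "(\<Sum>j<m. (d j)\<^sup>2) \<le> (\<Sum>j. (d j)\<^sup>2)"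
      by (intro sum_le_suminf summable_square_if_summable_abs[OF sd]) auto
    then have "ennreal (exp ((\<Sum>j<m. (d j)\<^sup>2) / 8)) \<le> ennreal (exp ((\<Sum>j. (d j)\<^sup>2) / 8))"
      by (intro ennreal_leI) simp
    then show "(\<integral>\<^sup>+y. u m y \<partial>lborel) \<le> ennreal (exp ((\<Sum>j. (d j)\<^sup>2) / 8))"
      unfolding u_def by (rule order_trans[OF nn_integral_exp_centered_tent_sum_le])
  qed simp
  finally show ?thesis .
qed

lemma emeasure_centered_tent_series_ge_le:
  assumes sd: "summable (\<lambda>j. \<bar>d j\<bar>)" and t: "0 < t" and V_pos: "0 < (\<Sum>j. (d j)\<^sup>2)"
  shows "emeasure lborel {y \<in> {0..1}. t \<le> centered_tent_series d y} \<le> ennreal (exp (- 2 * t\<^sup>2 / (\<Sum>j. (d j)\<^sup>2)))"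
proof -
  define V where "V = (\<Sum>j. (d j)\<^sup>2)"
  define s where "s = 4 * t / V"
  have s: "0 < s"
    using t V_pos by (simp add: s_def V_def)
  have sd': "summable (\<lambda>j. \<bar>s * d j\<bar>)"
    using summable_mult[OF sd, of "\<bar>s\<bar>"] by (simp add: abs_mult)
  have squares: "(\<Sum>j. (s * d j)\<^sup>2) = s\<^sup>2 * V"
    unfolding V_def power_mult_distrib by (rule suminf_mult[OF summable_square_if_summable_abs[OF sd]])
  have "emeasure lborel {y \<in> {0..1}. t \<le> centered_tent_series d y}
      \<le> ennreal (exp (- s * t)) * (\<integral>\<^sup>+y\<in>{0..1}. ennreal (exp (s * centered_tent_series d y)) \<partial>lborel)"
    by (rule Chernoff_ineq_nn_integral_ge[OF s]) simp_all
  also have "\<dots> \<le> ennreal (exp (- s * t)) * ennreal (exp (s\<^sup>2 * V / 8))"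
    using nn_integral_exp_centered_tent_series_le[OF sd']
    by (intro mult_left_mono) (simp_all add: centered_tent_series_scale[OF sd] squares)
  also have "\<dots> = ennreal (exp (- s * t + s\<^sup>2 * V / 8))"
    by (simp only: exp_add ennreal_mult[OF exp_ge_zero exp_ge_zero])
  also have "- s * t + s\<^sup>2 * V / 8 = - 2 * t\<^sup>2 / V"
    using V_pos by (simp add: s_def V_def power2_eq_square field_simps)
  finally show ?thesis
    by (simp add: V_def)
qed

lemma measure_abs_centered_tent_series_ge_le:
  assumes sd: "summable (\<lambda>j. \<bar>d j\<bar>)" and t: "0 < t" and V_pos: "0 < (\<Sum>j. (d j)\<^sup>2)"
  shows "measure lborel {y \<in> {0..1}. t \<le> \<bar>centered_tent_series d y\<bar>} \<le> 2 * exp (- 2 * t\<^sup>2 / (\<Sum>j. (d j)\<^sup>2))"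
proof -
  have sd': "summable (\<lambda>j. \<bar>- d j\<bar>)"
    using sd by simp
  have reflect: "centered_tent_series (\<lambda>j. - d j) y = - centered_tent_series d y" for y
    using centered_tent_series_scale[OF sd, of "-1"] by simp
  have "emeasure lborel {y \<in> {0..1}. t \<le> \<bar>centered_tent_series d y\<bar>}
      \<le> emeasure lborel ({y \<in> {0..1}. t \<le> centered_tent_series d y} \<union> {y \<in> {0..1}. t \<le> centered_tent_series (\<lambda>j. - d j) y})"
    by (intro emeasure_mono) (auto simp: reflect)
  also have "\<dots> \<le> emeasure lborel {y \<in> {0..1}. t \<le> centered_tent_series d y} + emeasure lborel {y \<in> {0..1}. t \<le> centered_tent_series (\<lambda>j. - d j) y}"
    by (rule emeasure_subadditive) simp_all
  also have "\<dots> \<le> ennreal (exp (- 2 * t\<^sup>2 / (\<Sum>j. (d j)\<^sup>2))) + ennreal (exp (- 2 * t\<^sup>2 / (\<Sum>j. (d j)\<^sup>2)))"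
    using emeasure_centered_tent_series_ge_le[OF sd t V_pos] emeasure_centered_tent_series_ge_le[OF sd' t] V_pos
    by (intro add_mono) simp_all
  also have "\<dots> = ennreal (2 * exp (- 2 * t\<^sup>2 / (\<Sum>j. (d j)\<^sup>2)))"
    by (simp flip: ennreal_plus)
  finally show ?thesis
    unfolding measure_def by (intro enn2real_leI) simp_all
qed

lemma AE_tendsto_zero_if_summable_measure:
  fixes X :: "nat \<Rightarrow> 'a \<Rightarrow> real"
  assumes [measurable]: "\<And>n. X n \<in> borel_measurable M" "A \<in> sets M"
    and A_finite: "emeasure M A < \<infinity>"
    and summable_measure: "\<And>e. 0 < e \<Longrightarrow> summable (\<lambda>n. measure M {x \<in> A. e \<le> \<bar>X n x\<bar>})"
  shows "AE x in M. x \<in> A \<longrightarrow> (\<lambda>n. X n x) \<longlonglongrightarrow> 0"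
proof -
  let ?B = "\<lambda>m n. {x \<in> A. inverse (Suc m) \<le> \<bar>X n x\<bar>}"
  have borel_cantelli: "AE x in M. eventually (\<lambda>n. x \<in> space M - ?B m n) sequentially" for m
  proof (rule borel_cantelli_AE1)
    show "emeasure M (?B m n) < \<infinity>" for n
      using emeasure_mono[of "?B m n" A M] A_finite by simp
  qed (simp_all add: summable_measure)
  then have "AE x in M. \<forall>m. eventually (\<lambda>n. x \<in> space M - ?B m n) sequentially"
    by (intro AE_all_countable[THEN iffD2] allI borel_cantelli)
  then show ?thesis
  proof (rule eventually_mono, intro impI LIMSEQ_I)
    fix x :: 'a and r :: real
    assume "\<forall>m. eventually (\<lambda>n. x \<in> space M - ?B m n) sequentially" "x \<in> A" "0 < r"
    moreover obtain m where "inverse (Suc m) < r"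
      using \<open>0 < r\<close> reals_Archimedean by blast
    ultimately have "eventually (\<lambda>n. norm (X n x - 0) < r) sequentially"
      by (auto elim!: allE[of _ m] eventually_mono)
    then show "\<exists>n0. \<forall>n\<ge>n0. norm (X n x - 0) < r"
      by (simp add: eventually_sequentially)
  qed
qed

lemma suminf_if_le_eq_suminf_offset:
  fixes f :: "nat \<Rightarrow> real"
  assumes "summable f"
  shows "(\<Sum>j. if n \<le> j then f j else 0) = (\<Sum>k. f (k + n))"
  using sums_zero_iff_shift[of n "\<lambda>j. if n \<le> j then f j else 0" "\<Sum>k. f (k + n)"]
    summable_ignore_initial_segment[OF assms, of n]
  by (simp add: sums_iff)

lemma tent_series_tail_decomposition:
  fixes c :: "nat \<Rightarrow> real"
  assumes sc: "summable (\<lambda>j. \<bar>c j\<bar>)" and N: "1 \<le> N"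
  shows "(\<Sum>n. c (Suc n) * tent_iter (Suc n) x) - (\<Sum>n\<in>{1..<N}. c n * tent_iter n x)
    = centered_tent_series (\<lambda>j. if N \<le> j then c j else 0) x + (1/2) * (\<Sum>k. c (k + N))"
proof -
  obtain M where M: "N = Suc M"
    using N by (cases N) auto
  define b where "b n = c n * tent_iter n x" for n
  have sb: "summable (\<lambda>n. b (Suc n))"
  proof (rule summable_comparison_test'[OF summable_ignore_initial_segment[OF sc, of 1], of 0])
    fix n
    have "\<bar>tent_iter (Suc n) x\<bar> \<le> 1"
      using tent_iter_in_unit_interval[of "Suc n" x] by auto
    then show "norm (b (Suc n)) \<le> \<bar>c (n + 1)\<bar>"
      by (simp add: b_def abs_mult mult_left_le)
  qed
  have sc': "summable (\<lambda>k. c (k + N))"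
    using summable_ignore_initial_segment[OF summable_rabs_cancel[OF sc]] .
  have sdev: "summable (\<lambda>k. c (k + N) * (tent_iter (k + N) x - 1/2))"
    using summable_ignore_initial_segment[OF summable_centered_tent_terms[OF sc]] .
  have padded: "(\<lambda>j. (if N \<le> j then c j else 0) * (tent_iter j x - 1/2))
      = (\<lambda>j. if N \<le> j then c j * (tent_iter j x - 1/2) else 0)"
    by auto
  have "(\<Sum>n. c (Suc n) * tent_iter (Suc n) x) = (\<Sum>n. b (Suc n))"
    by (simp add: b_def)
  also have "\<dots> = (\<Sum>k. b (k + N)) + (\<Sum>n<M. b (Suc n))"
    using suminf_split_initial_segment[OF sb, of M] by (simp add: M)
  also have "(\<Sum>n<M. b (Suc n)) = (\<Sum>n\<in>{1..<N}. c n * tent_iter n x)"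
    by (simp only: M b_def One_nat_def sum.shift_bounds_Suc_ivl atLeast0LessThan)
  also have "(\<Sum>k. b (k + N)) = (\<Sum>k. c (k + N) * (tent_iter (k + N) x - 1/2)) + (1/2) * (\<Sum>k. c (k + N))"
    using suminf_add[OF sdev summable_mult[OF sc', of "1/2"]] suminf_mult[OF sc', of "1/2"]
    by (simp add: b_def algebra_simps)
  also have "(\<Sum>k. c (k + N) * (tent_iter (k + N) x - 1/2)) = centered_tent_series (\<lambda>j. if N \<le> j then c j else 0) x"
    using suminf_if_le_eq_suminf_offset[OF summable_centered_tent_terms[OF sc], of N x]
    by (simp only: centered_tent_series_def padded)
  finally show ?thesis
    by linarith
qed

lemma measure_tail_ratio_ge_le:
  fixes c :: "nat \<Rightarrow> real"
  assumes sc: "summable (\<lambda>j. \<bar>c j\<bar>)" and V_pos: "0 < (\<Sum>k. (c (k + N))\<^sup>2)"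
    and S_nz: "(\<Sum>k. c (k + N)) \<noteq> 0" and e: "0 < e"
  shows "measure lborel {x \<in> {0..1}. e \<le> \<bar>centered_tent_series (\<lambda>j. if N \<le> j then c j else 0) x / (\<Sum>k. c (k + N))\<bar>}
    \<le> 2 * exp (- (2 * e\<^sup>2) * (\<Sum>k. c (k + N))\<^sup>2 / (\<Sum>k. (c (k + N))\<^sup>2))"
proof -
  let ?S = "\<Sum>k. c (k + N)" and ?d = "\<lambda>j. if N \<le> j then c j else 0"
  have sd: "summable (\<lambda>j. \<bar>?d j\<bar>)"
    by (rule summable_comparison_test'[OF sc, of 0]) simp
  have "(\<lambda>j. (?d j)\<^sup>2) = (\<lambda>j. if N \<le> j then (c j)\<^sup>2 else 0)"
    by auto
  then have squares: "(\<Sum>j. (?d j)\<^sup>2) = (\<Sum>k. (c (k + N))\<^sup>2)"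
    using suminf_if_le_eq_suminf_offset[OF summable_square_if_summable_abs[OF sc], of N] by simp
  have set_eq: "{x \<in> {0..1}. e \<le> \<bar>centered_tent_series ?d x / ?S\<bar>} = {x \<in> {0..1}. e * \<bar>?S\<bar> \<le> \<bar>centered_tent_series ?d x\<bar>}"
    using S_nz by (simp add: abs_divide pos_le_divide_eq)
  have exponent: "- 2 * (e * \<bar>?S\<bar>)\<^sup>2 / (\<Sum>k. (c (k + N))\<^sup>2) = - (2 * e\<^sup>2) * ?S\<^sup>2 / (\<Sum>k. (c (k + N))\<^sup>2)"
    by (simp add: power_mult_distrib)
  have "0 < e * \<bar>?S\<bar>" and "0 < (\<Sum>j. (?d j)\<^sup>2)"
    using S_nz e V_pos squares by simp_all
  from measure_abs_centered_tent_series_ge_le[OF sd this] show ?thesis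
    by (simp only: set_eq squares exponent)
qed

lemma AE_tail_ratio_tendsto_zero:
  fixes c :: "nat \<Rightarrow> real"
  assumes sc: "summable (\<lambda>j. \<bar>c j\<bar>)"
    and sq_pos: "\<And>N. N \<ge> 1 \<Longrightarrow> (\<Sum>k. (c (k + N))\<^sup>2) > 0"
    and tail_nz: "\<And>N. N \<ge> 1 \<Longrightarrow> (\<Sum>k. c (k + N)) \<noteq> 0"
    and exp_summ: "\<And>K::real. K > 0 \<Longrightarrow>
       summable (\<lambda>N. exp (- K * (\<Sum>k. c (k + Suc N))\<^sup>2 / (\<Sum>k. (c (k + Suc N))\<^sup>2)))"
  shows "AE x in lborel. x \<in> {0..1} \<longrightarrow>
    (\<lambda>N. centered_tent_series (\<lambda>j. if N \<le> j then c j else 0) x / (\<Sum>k. c (k + N))) \<longlonglongrightarrow> 0"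
proof (rule AE_tendsto_zero_if_summable_measure)
  fix e :: real
  assume e: "0 < e"
  let ?X = "\<lambda>N x. centered_tent_series (\<lambda>j. if N \<le> j then c j else 0) x / (\<Sum>k. c (k + N))"
  have "summable (\<lambda>n. 2 * exp (- (2 * e\<^sup>2) * (\<Sum>k. c (k + Suc n))\<^sup>2 / (\<Sum>k. (c (k + Suc n))\<^sup>2)))"
    using exp_summ[of "2 * e\<^sup>2"] e by (intro summable_mult) simp
  then have "summable (\<lambda>n. measure lborel {x \<in> {0..1}. e \<le> \<bar>?X (Suc n) x\<bar>})"
  proof (rule summable_comparison_test'[of _ 0])
    fix n :: nat
    have "measure lborel {x \<in> {0..1}. e \<le> \<bar>?X (Suc n) x\<bar>}
        \<le> 2 * exp (- (2 * e\<^sup>2) * (\<Sum>k. c (k + Suc n))\<^sup>2 / (\<Sum>k. (c (k + Suc n))\<^sup>2))"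
      by (rule measure_tail_ratio_ge_le[OF sc sq_pos tail_nz e]) simp_all
    then show "norm (measure lborel {x \<in> {0..1}. e \<le> \<bar>?X (Suc n) x\<bar>})
        \<le> 2 * exp (- (2 * e\<^sup>2) * (\<Sum>k. c (k + Suc n))\<^sup>2 / (\<Sum>k. (c (k + Suc n))\<^sup>2))"
      by (simp only: real_norm_def abs_of_nonneg[OF measure_nonneg])
  qed
  then show "summable (\<lambda>n. measure lborel {x \<in> {0..1}. e \<le> \<bar>?X n x\<bar>})"
    using summable_Suc_iff by blast
qed simp_all

theorem theorem1p1:
  fixes c :: "nat \<Rightarrow> real"
  assumes abs_summ: "summable (\<lambda>n. \<bar>c (Suc n)\<bar>)"
    and sq_pos: "\<And>N. N \<ge> 1 \<Longrightarrow> (\<Sum>k. (c (k + N))\<^sup>2) > 0"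
    and tail_nz: "\<And>N. N \<ge> 1 \<Longrightarrow> (\<Sum>k. c (k + N)) \<noteq> 0"
    and exp_summ: "\<And>K::real. K > 0 \<Longrightarrow>
       summable (\<lambda>N. exp (- K * (\<Sum>k. c (k + Suc N))\<^sup>2 / (\<Sum>k. (c (k + Suc N))\<^sup>2)))"
  shows "AE x in lborel. x \<in> {0..1} \<longrightarrow>
     ((\<lambda>N. ((\<Sum>n. c (Suc n) * tent_iter (Suc n) x) - (\<Sum>n\<in>{1..<N}. c n * tent_iter n x))
            / ((1/2) * (\<Sum>k. c (k + N)))) \<longlonglongrightarrow> 1)"
proof -
  have sc: "summable (\<lambda>j. \<bar>c j\<bar>)"
    using abs_summ summable_Suc_iff by blast
  let ?R = "\<lambda>x N. centered_tent_series (\<lambda>j. if N \<le> j then c j else 0) x / (\<Sum>k. c (k + N))"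
  have "AE x in lborel. x \<in> {0..1} \<longrightarrow> ?R x \<longlonglongrightarrow> 0"
    using sc sq_pos tail_nz exp_summ by (rule AE_tail_ratio_tendsto_zero)
  then show ?thesis
  proof (rule eventually_mono, intro impI)
    fix x :: real
    assume "x \<in> {0..1} \<longrightarrow> ?R x \<longlonglongrightarrow> 0" and "x \<in> {0..1}"
    then have "?R x \<longlonglongrightarrow> 0"
      by blast
    then have "(\<lambda>N. 1 + 2 * ?R x N) \<longlonglongrightarrow> 1 + 2 * 0"
      by (intro tendsto_add tendsto_mult tendsto_const)
    then have "(\<lambda>N. 1 + 2 * ?R x N) \<longlonglongrightarrow> 1"
      by (simp only: mult_zero_right add_0_right)
    moreover have "eventually (\<lambda>N. 1 + 2 * ?R x N = ((\<Sum>n. c (Suc n) * tent_iter (Suc n) x)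
        - (\<Sum>n\<in>{1..<N}. c n * tent_iter n x)) / ((1/2) * (\<Sum>k. c (k + N)))) sequentially"
      using eventually_ge_at_top[of 1]
    proof eventually_elim
      case (elim N)
      then show ?case
        using tent_series_tail_decomposition[OF sc elim, of x] tail_nz[OF elim] by (simp add: field_simps)
    qed
    ultimately show "(\<lambda>N. ((\<Sum>n. c (Suc n) * tent_iter (Suc n) x) - (\<Sum>n\<in>{1..<N}. c n * tent_iter n x))
        / ((1/2) * (\<Sum>k. c (k + N)))) \<longlonglongrightarrow> 1"
      by (rule Lim_transform_eventually)
  qed
qed

end
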